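(* Let $(X,\sigma_X)$ be a one-sided full shift, $(Y,\sigma_Y)$ a subshift, $\pi:X\to Y$ a one-block factor map, and $f\in C(X)$ depending only on the first coordinate. With $\bar g_n(y)=\sup_{E_n(y)}\sum_{x\in E_n(y)}e^{f(x)+\cdots+f(\sigma_X^{n-1}x)}$, one has $\bar g_n(y)=\bar g_1(y)\bar g_{n-1}(\sigma_Yy)$ for all $n\ge2$ and $y\in Y$. Consequently $\lim_{n\to\infty}\frac1n\int\log\bar g_n\,dm=\int\log\bar g_1\,dm$ for all $m\in M(Y,\sigma_Y)$, and the image under $\pi$ of the unique invariant Gibbs measure for $f$ is the unique invariant Gibbs measure for the locally constant function $\log\bar g_1$ on $Y$.
   Context: Full shift: $\{1,\dots,k\}^{\mathbb N}$ with left shift; subshift: closed shift-invariant subset of some $\{1,\dots,l\}^{\mathbb N}$. One-block factor map: continuous surjection commuting with shifts, $\pi(x)_i$ depending only on $x_i$. $E_n(y)$: any set with exactly one point from each cylinder $[x_1\cdots x_n]$ of $X$ with $\pi([x_1\cdots x_n])\subseteq[y_1\cdots y_n]$; the sup is over all such choices. Gibbs measure for $\phi\in C(Z)$: invariant $\mu$ with $C_0^{-1}<\mu([z_1\cdots z_n])/e^{-nP(\phi)+\sum_{i<n}\phi(\sigma^iz)}<C_0$ for all $z,n$. *)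

theory Defs
  imports "HOL-Probability.Probability"
begin

text \<open>Points of a one-sided shift space are sequences nat => nat (the paper's
  coordinates x_1, x_2, ... are x 0, x 1, ...).  The topology on nat => nat is
  the product topology (Function_Topology), nat being discrete.\<close>

definition sshift :: "(nat \<Rightarrow> nat) \<Rightarrow> (nat \<Rightarrow> nat)" where
  "sshift x = (\<lambda>i. x (Suc i))"

definition full_shift :: "nat \<Rightarrow> (nat \<Rightarrow> nat) set" where
  "full_shift k = {x. \<forall>i. x i \<in> {1..k}}"

definition subshift :: "nat \<Rightarrow> (nat \<Rightarrow> nat) set \<Rightarrow> bool" where
  "subshift l Y \<longleftrightarrow> Y \<subseteq> full_shift l \<and> closed Y \<and> sshift ` Y \<subseteq> Y"

definition one_block_factor ::
  "(nat \<Rightarrow> nat) set \<Rightarrow> (nat \<Rightarrow> nat) set \<Rightarrow> ((nat \<Rightarrow> nat) \<Rightarrow> (nat \<Rightarrow> nat)) \<Rightarrow> bool" where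
  "one_block_factor X Y \<pi> \<longleftrightarrow> continuous_on X \<pi> \<and> \<pi> ` X = Y \<and>
     (\<forall>x\<in>X. \<pi> (sshift x) = sshift (\<pi> x)) \<and>
     (\<exists>p. \<forall>x\<in>X. \<forall>i. \<pi> x i = p (x i))"

definition cyl :: "(nat \<Rightarrow> nat) set \<Rightarrow> nat \<Rightarrow> (nat \<Rightarrow> nat) \<Rightarrow> (nat \<Rightarrow> nat) set" where
  "cyl Z n z = {z' \<in> Z. \<forall>i<n. z' i = z i}"

definition cylinders :: "(nat \<Rightarrow> nat) set \<Rightarrow> nat \<Rightarrow> (nat \<Rightarrow> nat) set set" where
  "cylinders Z n = {cyl Z n z | z. z \<in> Z}"

definition bsum :: "((nat \<Rightarrow> nat) \<Rightarrow> real) \<Rightarrow> nat \<Rightarrow> (nat \<Rightarrow> nat) \<Rightarrow> real" where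
  "bsum \<phi> n z = (\<Sum>i<n. \<phi> ((sshift ^^ i) z))"

definition adm_cyls ::
  "(nat \<Rightarrow> nat) set \<Rightarrow> (nat \<Rightarrow> nat) set \<Rightarrow> ((nat \<Rightarrow> nat) \<Rightarrow> (nat \<Rightarrow> nat)) \<Rightarrow> nat \<Rightarrow> (nat \<Rightarrow> nat)
     \<Rightarrow> (nat \<Rightarrow> nat) set set" where
  "adm_cyls X Y \<pi> n y = {C \<in> cylinders X n. \<pi> ` C \<subseteq> cyl Y n y}"

definition E_set ::
  "(nat \<Rightarrow> nat) set \<Rightarrow> (nat \<Rightarrow> nat) set \<Rightarrow> ((nat \<Rightarrow> nat) \<Rightarrow> (nat \<Rightarrow> nat)) \<Rightarrow> nat \<Rightarrow> (nat \<Rightarrow> nat)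
     \<Rightarrow> (nat \<Rightarrow> nat) set \<Rightarrow> bool" where
  "E_set X Y \<pi> n y E \<longleftrightarrow> E \<subseteq> \<Union>(adm_cyls X Y \<pi> n y) \<and>
     (\<forall>C\<in>adm_cyls X Y \<pi> n y. card (E \<inter> C) = 1)"

definition gbar ::
  "(nat \<Rightarrow> nat) set \<Rightarrow> (nat \<Rightarrow> nat) set \<Rightarrow> ((nat \<Rightarrow> nat) \<Rightarrow> (nat \<Rightarrow> nat)) \<Rightarrow> ((nat \<Rightarrow> nat) \<Rightarrow> real)
     \<Rightarrow> nat \<Rightarrow> (nat \<Rightarrow> nat) \<Rightarrow> real" where
  "gbar X Y \<pi> f n y = Sup {(\<Sum>x\<in>E. exp (bsum f n x)) | E. E_set X Y \<pi> n y E}"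

definition invariant_prob :: "(nat \<Rightarrow> nat) set \<Rightarrow> (nat \<Rightarrow> nat) measure \<Rightarrow> bool" where
  "invariant_prob Z m \<longleftrightarrow> sets m = sets (restrict_space borel Z) \<and> prob_space m \<and>
     sshift \<in> m \<rightarrow>\<^sub>M m \<and> (\<forall>A\<in>sets m. emeasure m (sshift -` A \<inter> space m) = emeasure m A)"

definition pressure :: "(nat \<Rightarrow> nat) set \<Rightarrow> ((nat \<Rightarrow> nat) \<Rightarrow> real) \<Rightarrow> real" where
  "pressure Z \<phi> = lim (\<lambda>n. ln (\<Sum>C\<in>cylinders Z n. (SUP z\<in>C. exp (bsum \<phi> n z))) / real n)"

definition gibbs :: "(nat \<Rightarrow> nat) set \<Rightarrow> ((nat \<Rightarrow> nat) \<Rightarrow> real) \<Rightarrow> (nat \<Rightarrow> nat) measure \<Rightarrow> bool" where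
  "gibbs Z \<phi> \<mu> \<longleftrightarrow> invariant_prob Z \<mu> \<and>
     (\<exists>C0>0. \<forall>z\<in>Z. \<forall>n\<ge>1.
        inverse C0 < measure \<mu> (cyl Z n z) / exp (- real n * pressure Z \<phi> + bsum \<phi> n z) \<and>
        measure \<mu> (cyl Z n z) / exp (- real n * pressure Z \<phi> + bsum \<phi> n z) < C0)"

end

theory Submission
  imports Defs
begin

text \<open>
  Since f depends only on the first letter and \<pi> acts letterwise through p, the cylinders of X
  admissible over [y_1 ... y_n] are those of the words a_1 ... a_n with p(a_i) = y_i, and every
  choice E_n(y) gives the same sum, the product of the fibre weights
  G(y_i) = \<Sum>{exp (F a) | p a = y_i}.  This product form is the cocycle identity, and shift invariance
  of m turns the integral of log gbar_n into exactly n times that of log gbar_1.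

  Y is then the full shift over p({1..k}).  On a full shift a potential depending only on the
  first letter has the Bernoulli measure with weights exp (F a) / Z as Gibbs measure (pressure
  log Z, constant 1), and \<pi> maps it to the Bernoulli measure with weights G(b) / Z, which is the
  Bernoulli Gibbs measure of log G on Y.  It is the only Gibbs measure: an invariant \<mu> with
  \<mu>[w] \<le> C \<beta>[w] on all cylinders has \<mu>[u] = \<beta>[u] for every word u, by a second-moment
  estimate for the number of occurrences of u in disjoint blocks.
\<close>

section \<open>Sequence spaces and invariant measures\<close>

lemma sets_borel_nat_seq:
  "sets (borel :: (nat \<Rightarrow> nat) measure) = sets (PiM UNIV (\<lambda>_::nat. count_space (UNIV::nat set)))"
proof -
  have "sets (PiM UNIV (\<lambda>_::nat. count_space (UNIV::nat set))) = sets (PiM UNIV (\<lambda>_::nat. borel::nat measure))"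
    by (rule sets_PiM_cong) (auto simp: sets_borel_eq_count_space)
  then show ?thesis using sets_PiM_equal_borel[where 'a=nat and 'b=nat] by simp
qed

lemma measurable_coordinate[measurable]: "(\<lambda>x::nat\<Rightarrow>nat. x i) \<in> measurable borel (count_space UNIV)"
  using measurable_component_singleton[of i UNIV "\<lambda>_::nat. count_space (UNIV::nat set)"]
  by (simp add: measurable_cong_sets[OF sets_borel_nat_seq refl])

lemma rectangle_in_borel: "finite J \<Longrightarrow> {x::nat\<Rightarrow>nat. \<forall>j\<in>J. x j \<in> F j} \<in> sets borel"
  by measurable

lemma measurable_sshift[measurable]: "sshift \<in> measurable borel borel"
proof -
  have "sshift \<in> measurable (PiM UNIV (\<lambda>_::nat. count_space (UNIV::nat set)))
      (PiM UNIV (\<lambda>_::nat. count_space (UNIV::nat set)))"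
    unfolding sshift_def by (rule measurable_PiM_single') (auto simp: space_PiM)
  then show ?thesis by (simp add: measurable_cong_sets[OF sets_borel_nat_seq sets_borel_nat_seq])
qed

lemma measurable_letter_map:
  fixes p :: "nat \<Rightarrow> nat"
  shows "(\<lambda>x i. p (x i)) \<in> measurable borel (borel :: (nat \<Rightarrow> nat) measure)"
proof -
  have "(\<lambda>x i. p (x i)) \<in> measurable (PiM UNIV (\<lambda>_::nat. count_space (UNIV::nat set)))
      (PiM UNIV (\<lambda>_::nat. count_space (UNIV::nat set)))"
    by (rule measurable_PiM_single') (auto simp: space_PiM)
  then show ?thesis by (simp add: measurable_cong_sets[OF sets_borel_nat_seq sets_borel_nat_seq])
qed

lemma funpow_sshift: "(sshift ^^ m) x = (\<lambda>i. x (i + m))"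
  by (induction m arbitrary: x) (auto simp: sshift_def funpow_Suc_right)

lemma space_invariant_prob: "invariant_prob Z \<mu> \<Longrightarrow> space \<mu> = Z"
  unfolding invariant_prob_def
  using sets_eq_imp_space_eq by (fastforce simp: space_restrict_space)

lemma measurable_funpow_sshift: "invariant_prob Z \<mu> \<Longrightarrow> (sshift ^^ m) \<in> measurable \<mu> \<mu>"
proof (induction m)
  case (Suc m)
  then have "(sshift ^^ m) \<circ> sshift \<in> measurable \<mu> \<mu>"
    using invariant_prob_def measurable_comp by blast
  then show ?case by (simp only: funpow_Suc_right)
qed simp

lemma emeasure_funpow_sshift_preimage:
  assumes inv: "invariant_prob Z \<mu>" and D: "D \<in> sets \<mu>"
  shows "emeasure \<mu> ((sshift ^^ m) -` D \<inter> Z) = emeasure \<mu> D"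
proof (induction m)
  case 0 then show ?case
    using sets.sets_into_space[OF D] space_invariant_prob[OF inv] by (simp add: Int_absorb2)
next
  case (Suc m)
  have sp: "space \<mu> = Z" by (rule space_invariant_prob[OF inv])
  have m: "(sshift ^^ m) -` D \<inter> Z \<in> sets \<mu>"
    using measurable_sets[OF measurable_funpow_sshift[OF inv] D] sp by simp
  have "sshift x \<in> Z" if "x \<in> Z" for x
    using inv that sp unfolding invariant_prob_def by (metis measurable_space)
  then have "(sshift ^^ Suc m) -` D \<inter> Z = sshift -` ((sshift ^^ m) -` D \<inter> Z) \<inter> Z"
    by (auto simp: funpow_swap1)
  moreover have "emeasure \<mu> (sshift -` ((sshift ^^ m) -` D \<inter> Z) \<inter> Z) = emeasure \<mu> ((sshift ^^ m) -` D \<inter> Z)"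
    using inv m sp unfolding invariant_prob_def by metis
  ultimately show ?case using Suc by (simp add: comp_def)
qed

lemma square_sum_centered_indicators:
  fixes D :: "nat \<Rightarrow> 'a set" and c :: real
  shows "(\<Sum>j<N. indicator (D j) x - c)\<^sup>2 =
    (\<Sum>j<N. \<Sum>j'<N. indicator (D j \<inter> D j') x - c * indicator (D j) x - c * indicator (D j') x + c * c)"
proof -
  have "(\<Sum>j<N. indicator (D j) x - c)\<^sup>2 = (\<Sum>j<N. \<Sum>j'<N. (indicator (D j) x - c) * (indicator (D j') x - c))"
    by (simp add: power2_eq_square sum_product)
  also have "\<dots> = (\<Sum>j<N. \<Sum>j'<N. indicator (D j \<inter> D j') x - c * indicator (D j) x - c * indicator (D j') x + c * c)"
    by (intro sum.cong refl) (simp add: indicator_inter_arith algebra_simps)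
  finally show ?thesis .
qed

lemma (in prob_space) moments_sum_centered_indicators:
  fixes D :: "nat \<Rightarrow> 'a set" and c :: real
  assumes D: "\<And>j. D j \<in> events"
  shows "integrable M (\<lambda>x. (\<Sum>j<N. indicator (D j) x - c)\<^sup>2)"
    and "(\<integral>x. (\<Sum>j<N. indicator (D j) x - c)\<^sup>2 \<partial>M) =
      (\<Sum>j<N. \<Sum>j'<N. prob (D j \<inter> D j') - c * prob (D j) - c * prob (D j') + c * c)"
    and "integrable M (\<lambda>x. (\<Sum>j<N. indicator (D j) x - c))"
    and "(\<integral>x. (\<Sum>j<N. indicator (D j) x - c) \<partial>M) = (\<Sum>j<N. prob (D j) - c)"
proof -
  have DD: "D j \<inter> D j' \<in> events" for j j' using D by auto
  have i1: "integrable M (indicator (D j) :: _ \<Rightarrow> real)" for j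
    using D by (intro integrable_real_indicator) (auto simp: less_top[symmetric])
  have i2: "integrable M (indicator (D j \<inter> D j') :: _ \<Rightarrow> real)" for j j'
    using DD by (intro integrable_real_indicator) (auto simp: less_top[symmetric])
  have ii: "integrable M (\<lambda>x. indicator (D j \<inter> D j') x - c * indicator (D j) x - c * indicator (D j') x + c * c)"
    for j j' using i1 i2 by auto
  show "integrable M (\<lambda>x. (\<Sum>j<N. indicator (D j) x - c)\<^sup>2)"
    unfolding square_sum_centered_indicators using ii by (intro Bochner_Integration.integrable_sum) auto
  have "(\<integral>x. (\<Sum>j<N. indicator (D j) x - c)\<^sup>2 \<partial>M) =
     (\<Sum>j<N. \<Sum>j'<N. (\<integral>x. indicator (D j \<inter> D j') x - c * indicator (D j) x - c * indicator (D j') x + c * c \<partial>M))"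
    unfolding square_sum_centered_indicators
    using ii by (simp add: Bochner_Integration.integral_sum Bochner_Integration.integrable_sum)
  also have "\<dots> = (\<Sum>j<N. \<Sum>j'<N. prob (D j \<inter> D j') - c * prob (D j) - c * prob (D j') + c * c)"
    using i1 i2 D DD by (intro sum.cong refl) (simp add: Int_absorb2 sets.sets_into_space prob_space)
  finally show "(\<integral>x. (\<Sum>j<N. indicator (D j) x - c)\<^sup>2 \<partial>M) =
      (\<Sum>j<N. \<Sum>j'<N. prob (D j \<inter> D j') - c * prob (D j) - c * prob (D j') + c * c)" .
  show "integrable M (\<lambda>x. (\<Sum>j<N. indicator (D j) x - c))"
    using i1 by (intro Bochner_Integration.integrable_sum) auto
  show "(\<integral>x. (\<Sum>j<N. indicator (D j) x - c) \<partial>M) = (\<Sum>j<N. prob (D j) - c)"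
    using i1 D by (simp add: Bochner_Integration.integral_sum Int_absorb2 sets.sets_into_space prob_space)
qed

section \<open>Bernoulli measures on full shifts\<close>

locale bernoulli_shift =
  fixes A :: "nat set" and \<Phi> :: "nat \<Rightarrow> real"
  assumes finite_alphabet: "finite A" and alphabet_nonempty: "A \<noteq> {}"
begin

definition "S = {x::nat\<Rightarrow>nat. \<forall>i. x i \<in> A}"
definition "Z = (\<Sum>a\<in>A. exp (\<Phi> a))"
definition "weight a = (if a \<in> A then exp (\<Phi> a) / Z else 0)"
definition "letter_pmf = embed_pmf weight"
definition "product_measure = PiM UNIV (\<lambda>_::nat. measure_pmf letter_pmf)"
definition "bernoulli = restrict_space product_measure S"
definition "cyl_weight n z = (\<Prod>j<n. weight (z j))"

lemma Z_pos: "Z > 0"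
  unfolding Z_def using finite_alphabet alphabet_nonempty by (intro sum_pos) auto

lemma weight_nonneg: "weight a \<ge> 0"
  using Z_pos by (simp add: weight_def)

lemma weight_pos: "a \<in> A \<Longrightarrow> weight a > 0"
  using Z_pos by (simp add: weight_def)

lemma sum_weight: "(\<Sum>a\<in>A. weight a) = 1"
proof -
  have "(\<Sum>a\<in>A. weight a) = (\<Sum>a\<in>A. exp (\<Phi> a)) / Z"
    by (simp add: weight_def sum_divide_distrib)
  then show ?thesis using Z_pos by (simp add: Z_def)
qed

lemma pmf_letter_pmf: "pmf letter_pmf a = weight a"
proof -
  have "(\<integral>\<^sup>+x. ennreal (weight x) \<partial>count_space UNIV) = (\<Sum>x\<in>A. ennreal (weight x))"
    using finite_alphabet by (intro nn_integral_count_space') (auto simp: weight_def)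
  also have "\<dots> = 1" using weight_nonneg sum_weight by (simp add: sum_ennreal)
  finally show ?thesis unfolding letter_pmf_def using weight_nonneg by (subst pmf_embed_pmf) auto
qed

lemma set_letter_pmf: "set_pmf letter_pmf = A"
  using weight_pos by (auto simp: set_pmf_eq pmf_letter_pmf weight_def)

lemma measure_letter_pmf: "measure letter_pmf B = (\<Sum>a\<in>B\<inter>A. weight a)"
proof -
  have "measure letter_pmf B = measure letter_pmf (B \<inter> set_pmf letter_pmf)"
    by (simp add: measure_Int_set_pmf)
  also have "\<dots> = (\<Sum>a\<in>B\<inter>A. weight a)" using finite_alphabet
    by (simp add: set_letter_pmf measure_measure_pmf_finite pmf_letter_pmf)
  finally show ?thesis .
qed

interpretation P: product_prob_space "\<lambda>_::nat. measure_pmf letter_pmf" UNIV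
  by unfold_locales

lemma sets_product_measure: "sets product_measure = sets borel"
proof -
  have "sets product_measure = sets (PiM UNIV (\<lambda>_::nat. count_space (UNIV::nat set)))"
    unfolding product_measure_def by (rule sets_PiM_cong) auto
  then show ?thesis using sets_borel_nat_seq by simp
qed

lemma space_product_measure: "space product_measure = UNIV"
  unfolding product_measure_def by (simp add: space_PiM)

lemma prod_emb_eq_rectangle:
  "prod_emb UNIV (\<lambda>_::nat. measure_pmf letter_pmf) J (PiE J F) = {x. \<forall>j\<in>J. x j \<in> F j}"
  by (auto simp: prod_emb_def PiE_iff space_PiM)

lemma emeasure_product_rectangle:
  "finite J \<Longrightarrow> emeasure product_measure {x. \<forall>j\<in>J. x j \<in> F j} = (\<Prod>j\<in>J. ennreal (measure letter_pmf (F j)))"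
  unfolding product_measure_def prod_emb_eq_rectangle[symmetric]
  by (subst P.emeasure_PiM_emb) (auto simp: measure_pmf.emeasure_eq_measure)

lemma S_in_sets: "S \<in> sets product_measure"
proof -
  have "S \<in> sets borel" unfolding S_def by measurable
  then show ?thesis by (simp add: sets_product_measure)
qed

lemma AE_in_S: "AE x in product_measure. x \<in> S"
proof -
  have "\<And>i. AE x in product_measure. x i \<in> A"
    unfolding product_measure_def
    by (rule P.AE_component) (auto simp: AE_measure_pmf_iff set_letter_pmf)
  then show ?thesis unfolding S_def by (simp add: AE_all_countable)
qed

lemma emeasure_product_S: "emeasure product_measure S = 1"
proof -
  have "emeasure product_measure S = emeasure product_measure (space product_measure)"
    using AE_in_S S_in_sets by (intro emeasure_eq_AE) auto
  then show ?thesis unfolding product_measure_def using P.emeasure_space_1 by simp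
qed

lemma sshift_in_S: "x \<in> S \<Longrightarrow> sshift x \<in> S"
  by (auto simp: S_def sshift_def)

lemma sets_bernoulli: "sets bernoulli = sets (restrict_space borel S)"
  unfolding bernoulli_def by (rule sets_restrict_space_cong[OF sets_product_measure])

lemma space_bernoulli: "space bernoulli = S"
  unfolding bernoulli_def by (simp add: space_restrict_space space_product_measure)

lemma prob_space_bernoulli: "prob_space bernoulli"
  unfolding bernoulli_def by (rule prob_space_restrict_space[OF S_in_sets emeasure_product_S])

lemma emeasure_bernoulli: "D \<subseteq> S \<Longrightarrow> emeasure bernoulli D = emeasure product_measure D"
  unfolding bernoulli_def using S_in_sets space_product_measure by (intro emeasure_restrict_space) auto

lemma sets_restrict_S_iff: "D \<in> sets (restrict_space borel S) \<longleftrightarrow> D \<subseteq> S \<and> D \<in> sets product_measure"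
proof -
  have "sets (restrict_space borel S) = sets (restrict_space product_measure S)"
    using sets_restrict_space_cong[OF sets_product_measure] by simp
  then show ?thesis using S_in_sets space_product_measure by (simp add: sets_restrict_space_iff)
qed

lemma emeasure_bernoulli_rectangle:
  assumes J: "finite J"
  shows "emeasure bernoulli (S \<inter> {x. \<forall>j\<in>J. x j \<in> F j}) = (\<Prod>j\<in>J. ennreal (measure letter_pmf (F j)))"
proof -
  have R: "{x. \<forall>j\<in>J. x j \<in> F j} \<in> sets product_measure"
    using rectangle_in_borel[OF J] by (simp add: sets_product_measure)
  have "emeasure bernoulli (S \<inter> {x. \<forall>j\<in>J. x j \<in> F j}) = emeasure product_measure (S \<inter> {x. \<forall>j\<in>J. x j \<in> F j})"
    by (intro emeasure_bernoulli) auto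
  also have "\<dots> = emeasure product_measure {x. \<forall>j\<in>J. x j \<in> F j}"
    using AE_in_S R S_in_sets by (intro emeasure_eq_AE) auto
  also have "\<dots> = (\<Prod>j\<in>J. ennreal (measure letter_pmf (F j)))" using emeasure_product_rectangle[OF J] .
  finally show ?thesis .
qed

lemma measure_bernoulli_rectangle:
  "finite J \<Longrightarrow> measure bernoulli (S \<inter> {x. \<forall>j\<in>J. x j \<in> F j}) = (\<Prod>j\<in>J. measure letter_pmf (F j))"
  using emeasure_bernoulli_rectangle[of J F] unfolding measure_def
  by (simp add: prod_ennreal prod_nonneg)

lemma cyl_eq_rectangle: "cyl S n z = S \<inter> {x. \<forall>j\<in>{..<n}. x j \<in> {z j}}"
  unfolding cyl_def by auto

lemma measure_bernoulli_cyl: "z \<in> S \<Longrightarrow> measure bernoulli (cyl S n z) = cyl_weight n z"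
  unfolding cyl_eq_rectangle cyl_weight_def using measure_bernoulli_rectangle[of "{..<n}" "\<lambda>j. {z j}"]
  by (simp add: measure_letter_pmf S_def)

lemma cyl_weight_pos: "z \<in> S \<Longrightarrow> cyl_weight n z > 0"
  unfolding cyl_weight_def S_def using weight_pos by (intro prod_pos) auto

lemma cyl_in_sets: "cyl S n z \<in> sets (restrict_space borel S)"
  unfolding sets_restrict_S_iff cyl_eq_rectangle
  using rectangle_in_borel[of "{..<n}"] S_in_sets by (auto simp: sets_product_measure)

lemma distr_sshift_product: "distr product_measure product_measure sshift = product_measure"
  unfolding product_measure_def
proof (rule P.PiM_eq)
  have sh: "sshift \<in> measurable product_measure product_measure"
    using measurable_sshift by (simp add: measurable_cong_sets[OF sets_product_measure sets_product_measure])
  fix J :: "nat set" and F :: "nat \<Rightarrow> nat set"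
  assume J: "finite J"
  have "emeasure (distr product_measure product_measure sshift) {x. \<forall>j\<in>J. x j \<in> F j}
      = emeasure product_measure (sshift -` {x. \<forall>j\<in>J. x j \<in> F j} \<inter> space product_measure)"
    using sh rectangle_in_borel[OF J, of F] by (intro emeasure_distr) (auto simp: sets_product_measure)
  also have "sshift -` {x. \<forall>j\<in>J. x j \<in> F j} \<inter> space product_measure = {x. \<forall>j'\<in>Suc ` J. x j' \<in> F (j' - 1)}"
    by (auto simp: sshift_def space_product_measure)
  also have "emeasure product_measure \<dots> = (\<Prod>j'\<in>Suc ` J. ennreal (measure letter_pmf (F (j' - 1))))"
    using J by (intro emeasure_product_rectangle) auto
  also have "\<dots> = (\<Prod>j\<in>J. ennreal (measure letter_pmf (F j)))"
    by (subst prod.reindex) auto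
  finally show "emeasure (distr (Pi\<^sub>M UNIV (\<lambda>_. measure_pmf letter_pmf)) (Pi\<^sub>M UNIV (\<lambda>_. measure_pmf letter_pmf)) sshift)
       (prod_emb UNIV (\<lambda>_. measure_pmf letter_pmf) J (Pi\<^sub>E J F)) = (\<Prod>j\<in>J. emeasure (measure_pmf letter_pmf) (F j))"
    unfolding prod_emb_eq_rectangle product_measure_def[symmetric]
    by (simp add: measure_pmf.emeasure_eq_measure)
qed simp

lemma invariant_bernoulli: "invariant_prob S bernoulli"
  unfolding invariant_prob_def
proof (intro conjI ballI sets_bernoulli prob_space_bernoulli)
  have sh: "sshift \<in> measurable product_measure product_measure"
    using measurable_sshift by (simp add: measurable_cong_sets[OF sets_product_measure sets_product_measure])
  then show "sshift \<in> bernoulli \<rightarrow>\<^sub>M bernoulli"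
    unfolding bernoulli_def using sshift_in_S by (intro measurable_restrict_space3) auto
  fix D assume "D \<in> sets bernoulli"
  then have D: "D \<subseteq> S" "D \<in> sets product_measure" using sets_restrict_S_iff sets_bernoulli by auto
  have pre: "sshift -` D \<inter> space product_measure \<in> sets product_measure"
    using measurable_sets[OF sh D(2)] .
  have "emeasure bernoulli (sshift -` D \<inter> space bernoulli) = emeasure product_measure (sshift -` D \<inter> S)"
    by (simp add: space_bernoulli emeasure_bernoulli)
  also have "\<dots> = emeasure product_measure (sshift -` D \<inter> space product_measure)"
    using AE_in_S pre S_in_sets by (intro emeasure_eq_AE) (auto simp: space_product_measure)
  also have "\<dots> = emeasure (distr product_measure product_measure sshift) D"
    using sh D by (simp add: emeasure_distr)
  also have "\<dots> = emeasure bernoulli D" using D by (simp add: distr_sshift_product emeasure_bernoulli)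
  finally show "emeasure bernoulli (sshift -` D \<inter> space bernoulli) = emeasure bernoulli D" .
qed

definition "words (n::nat) = PiE {..<n} (\<lambda>_. A)"
definition "pad (n::nat) w = (\<lambda>i. if i < n then w i else (SOME a. a \<in> A))"

lemma finite_words: "finite (words n)"
  unfolding words_def using finite_alphabet by (intro finite_PiE finite_lessThan)

lemma pad_in_S: "w \<in> words n \<Longrightarrow> pad n w \<in> S"
  using alphabet_nonempty by (auto simp: words_def pad_def S_def PiE_iff some_in_eq)

lemma restrict_in_words: "x \<in> S \<Longrightarrow> restrict x {..<n} \<in> words n"
  by (auto simp: words_def S_def)

lemma mem_cyl_pad_iff: "w \<in> words n \<Longrightarrow> x \<in> S \<Longrightarrow> x \<in> cyl S n (pad n w) \<longleftrightarrow> restrict x {..<n} = w"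
  by (auto simp: cyl_def pad_def words_def PiE_iff extensional_def fun_eq_iff)

lemma cyl_weight_pad: "cyl_weight n (pad n w) = (\<Prod>i<n. weight (w i))"
  unfolding cyl_weight_def pad_def by (intro prod.cong) auto

lemma integral_eq_sum_cylinders:
  fixes \<nu> :: "(nat \<Rightarrow> nat) measure" and g :: "(nat \<Rightarrow> nat) \<Rightarrow> real"
  assumes sets: "sets \<nu> = sets (restrict_space borel S)" and fin: "finite_measure \<nu>"
    and dep: "\<And>x y. x \<in> S \<Longrightarrow> y \<in> S \<Longrightarrow> (\<And>j. j < n \<Longrightarrow> x j = y j) \<Longrightarrow> g x = g y"
  shows "(\<integral>x. g x \<partial>\<nu>) = (\<Sum>w\<in>words n. g (pad n w) * measure \<nu> (cyl S n (pad n w)))"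
proof -
  have sp: "space \<nu> = S" using sets_eq_imp_space_eq[OF sets] by (simp add: space_restrict_space)
  have eq: "g x = (\<Sum>w\<in>words n. g (pad n w) * indicator (cyl S n (pad n w)) x)" if x: "x \<in> S" for x
  proof -
    have "(\<Sum>w\<in>words n. g (pad n w) * indicator (cyl S n (pad n w)) x)
        = (\<Sum>w\<in>words n. if w = restrict x {..<n} then g (pad n w) else 0)"
      using x by (intro sum.cong) (auto simp: mem_cyl_pad_iff indicator_def)
    also have "\<dots> = g (pad n (restrict x {..<n}))"
      using restrict_in_words[OF x, of n] finite_words[of n] by (simp add: sum.delta'[where S="words n"])
    also have "\<dots> = g x"
      using x restrict_in_words[OF x] pad_in_S by (intro dep) (auto simp: pad_def)
    finally show ?thesis by simp
  qed
  have "(\<integral>x. g x \<partial>\<nu>) = (\<integral>x. (\<Sum>w\<in>words n. g (pad n w) * indicator (cyl S n (pad n w)) x) \<partial>\<nu>)"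
    by (rule Bochner_Integration.integral_cong[OF refl]) (auto simp: sp eq)
  also have "\<dots> = (\<Sum>w\<in>words n. (\<integral>x. g (pad n w) * indicator (cyl S n (pad n w)) x \<partial>\<nu>))"
  proof (rule Bochner_Integration.integral_sum)
    fix w
    have "cyl S n (pad n w) \<in> sets \<nu>" using cyl_in_sets sets by simp
    then show "integrable \<nu> (\<lambda>x. g (pad n w) * indicator (cyl S n (pad n w)) x)"
      using fin by (intro integrable_mult_right integrable_real_indicator)
        (auto simp: finite_measure.emeasure_finite less_top[symmetric])
  qed
  also have "\<dots> = (\<Sum>w\<in>words n. g (pad n w) * measure \<nu> (cyl S n (pad n w)))"
    by (intro sum.cong refl) (simp add: sp cyl_def Int_absorb2)
  finally show ?thesis .
qed

lemma sum_pad_rectangle: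
  assumes J: "J \<subseteq> {..<n}"
  shows "(\<Sum>w\<in>words n. indicator (S \<inter> {x. \<forall>j\<in>J. x j \<in> F j}) (pad n w) * cyl_weight n (pad n w))
       = (\<Prod>j\<in>J. measure letter_pmf (F j))"
proof -
  define A' where "A' i = (if i \<in> J then A \<inter> F i else A)" for i
  define W' where "W' = PiE {..<n} A'"
  have "(\<Sum>w\<in>words n. indicator (S \<inter> {x. \<forall>j\<in>J. x j \<in> F j}) (pad n w) * cyl_weight n (pad n w))
      = (\<Sum>w\<in>words n. if w \<in> W' then (\<Prod>i<n. weight (w i)) else 0)"
  proof (intro sum.cong refl)
    fix w assume w: "w \<in> words n"
    have "pad n w \<in> {x. \<forall>j\<in>J. x j \<in> F j} \<longleftrightarrow> w \<in> W'"
      using w J unfolding W'_def A'_def words_def PiE_iff pad_def by auto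
    then show "indicator (S \<inter> {x. \<forall>j\<in>J. x j \<in> F j}) (pad n w) * cyl_weight n (pad n w)
      = (if w \<in> W' then (\<Prod>i<n. weight (w i)) else 0)"
      using pad_in_S[OF w] by (simp add: cyl_weight_pad indicator_def)
  qed
  also have "\<dots> = (\<Sum>w\<in>words n \<inter> W'. (\<Prod>i<n. weight (w i)))"
    by (rule sum.inter_restrict[OF finite_words, symmetric])
  also have "words n \<inter> W' = W'"
    unfolding words_def W'_def A'_def by (intro Int_absorb1 PiE_mono) auto
  also have "(\<Sum>w\<in>W'. (\<Prod>i<n. weight (w i))) = (\<Prod>i<n. \<Sum>a\<in>A' i. weight a)"
    unfolding W'_def using finite_alphabet by (subst prod_sum_PiE) (auto simp: A'_def)
  also have "\<dots> = (\<Prod>i\<in>{..<n} - J. \<Sum>a\<in>A' i. weight a) * (\<Prod>i\<in>J. \<Sum>a\<in>A' i. weight a)"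
    using J by (intro prod.subset_diff) auto
  also have "(\<Prod>i\<in>{..<n} - J. \<Sum>a\<in>A' i. weight a) = 1"
    by (intro prod.neutral) (auto simp: A'_def sum_weight)
  also have "(\<Prod>i\<in>J. \<Sum>a\<in>A' i. weight a) = (\<Prod>j\<in>J. measure letter_pmf (F j))"
    by (intro prod.cong refl) (auto simp: A'_def measure_letter_pmf Int_commute)
  finally show ?thesis by simp
qed

lemma measurable_ident_S:
  assumes "sets \<nu> = sets (restrict_space borel S)"
  shows "(\<lambda>x. x) \<in> measurable \<nu> product_measure"
proof -
  have "(\<lambda>x. x) \<in> measurable (restrict_space borel S) borel"
    by (intro measurable_restrict_space1) simp
  then show ?thesis by (simp add: measurable_cong_sets[OF assms sets_product_measure])
qed

lemma distr_product_of_cylinders: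
  fixes \<mu> :: "(nat \<Rightarrow> nat) measure"
  assumes sets: "sets \<mu> = sets (restrict_space borel S)" and pr: "prob_space \<mu>"
    and cv: "\<And>z n. z \<in> S \<Longrightarrow> n \<ge> 1 \<Longrightarrow> measure \<mu> (cyl S n z) = cyl_weight n z"
  shows "distr \<mu> product_measure (\<lambda>x. x) = product_measure"
  unfolding product_measure_def
proof (rule P.PiM_eq)
  fix J :: "nat set" and F :: "nat \<Rightarrow> nat set"
  assume J: "finite J"
  define R where "R = S \<inter> {x. \<forall>j\<in>J. x j \<in> F j}"
  have sp: "space \<mu> = S" using sets_eq_imp_space_eq[OF sets] by (simp add: space_restrict_space)
  have id: "(\<lambda>x. x) \<in> measurable \<mu> product_measure" by (rule measurable_ident_S[OF sets])
  define n where "n = Suc (Max (insert 0 J))"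
  have Jn: "J \<subseteq> {..<n}" using J by (auto simp: n_def le_imp_less_Suc)
  have "emeasure (distr \<mu> product_measure (\<lambda>x. x)) {x. \<forall>j\<in>J. x j \<in> F j} = emeasure \<mu> R"
    using id rectangle_in_borel[OF J] by (subst emeasure_distr) (auto simp: sp R_def Int_commute sets_product_measure)
  also have "\<dots> = ennreal (\<integral>x. indicator R x \<partial>\<mu>)"
    using prob_space.finite_measure[OF pr] by (simp add: finite_measure.emeasure_eq_measure sp R_def Int_absorb2)
  also have "(\<integral>x. indicator R x \<partial>\<mu>) = (\<Sum>w\<in>words n. indicator R (pad n w) * measure \<mu> (cyl S n (pad n w)))"
    using Jn by (intro integral_eq_sum_cylinders[OF sets prob_space.finite_measure[OF pr]])
      (auto simp: R_def indicator_def subset_iff)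
  also have "\<dots> = (\<Sum>w\<in>words n. indicator R (pad n w) * cyl_weight n (pad n w))"
    using cv pad_in_S by (intro sum.cong refl) (auto simp: n_def)
  also have "\<dots> = (\<Prod>j\<in>J. measure letter_pmf (F j))" unfolding R_def by (rule sum_pad_rectangle[OF Jn])
  finally show "emeasure (distr \<mu> (Pi\<^sub>M UNIV (\<lambda>_. measure_pmf letter_pmf)) (\<lambda>x. x))
       (prod_emb UNIV (\<lambda>_. measure_pmf letter_pmf) J (Pi\<^sub>E J F)) = (\<Prod>j\<in>J. emeasure (measure_pmf letter_pmf) (F j))"
    unfolding prod_emb_eq_rectangle product_measure_def[symmetric]
    by (simp add: measure_pmf.emeasure_eq_measure prod_ennreal)
qed simp

lemma eq_bernoulli_of_cylinders:
  fixes \<mu> :: "(nat \<Rightarrow> nat) measure"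
  assumes sets: "sets \<mu> = sets (restrict_space borel S)" and pr: "prob_space \<mu>"
    and cv: "\<And>z n. z \<in> S \<Longrightarrow> n \<ge> 1 \<Longrightarrow> measure \<mu> (cyl S n z) = cyl_weight n z"
  shows "\<mu> = bernoulli"
proof (rule measure_eqI)
  show "sets \<mu> = sets bernoulli" using sets sets_bernoulli by simp
  fix D assume "D \<in> sets \<mu>"
  then have D: "D \<subseteq> S" "D \<in> sets product_measure" using sets sets_restrict_S_iff by auto
  have "emeasure \<nu> D = emeasure product_measure D"
    if s: "sets \<nu> = sets (restrict_space borel S)" and p: "prob_space \<nu>"
      and c: "\<And>z n. z \<in> S \<Longrightarrow> n \<ge> 1 \<Longrightarrow> measure \<nu> (cyl S n z) = cyl_weight n z" for \<nu>
  proof -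
    have sp: "space \<nu> = S" using sets_eq_imp_space_eq[OF s] by (simp add: space_restrict_space)
    have id: "(\<lambda>x. x) \<in> measurable \<nu> product_measure" by (rule measurable_ident_S[OF s])
    have "emeasure \<nu> D = emeasure (distr \<nu> product_measure (\<lambda>x. x)) D"
      using id D by (subst emeasure_distr) (auto simp: sp Int_absorb2)
    then show ?thesis using distr_product_of_cylinders[OF s p c] by simp
  qed
  from this[OF sets pr cv] this[OF sets_bernoulli prob_space_bernoulli measure_bernoulli_cyl]
  show "emeasure \<mu> D = emeasure bernoulli D" by simp
qed

section \<open>Uniqueness of the Bernoulli Gibbs measure\<close>

lemma integral_le_of_cylinder_bound:
  fixes \<mu> :: "(nat \<Rightarrow> nat) measure" and g :: "(nat \<Rightarrow> nat) \<Rightarrow> real"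
  assumes sets: "sets \<mu> = sets (restrict_space borel S)" and pr: "prob_space \<mu>"
    and bound: "\<And>z n. z \<in> S \<Longrightarrow> n \<ge> 1 \<Longrightarrow> measure \<mu> (cyl S n z) \<le> C * cyl_weight n z"
    and n: "n \<ge> 1"
    and dep: "\<And>x y. x \<in> S \<Longrightarrow> y \<in> S \<Longrightarrow> (\<And>j. j < n \<Longrightarrow> x j = y j) \<Longrightarrow> g x = g y"
    and nonneg: "\<And>x. x \<in> S \<Longrightarrow> g x \<ge> 0"
  shows "(\<integral>x. g x \<partial>\<mu>) \<le> C * (\<integral>x. g x \<partial>bernoulli)"
proof -
  have "(\<integral>x. g x \<partial>\<mu>) = (\<Sum>w\<in>words n. g (pad n w) * measure \<mu> (cyl S n (pad n w)))"
    by (rule integral_eq_sum_cylinders[OF sets prob_space.finite_measure[OF pr] dep])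
  also have "\<dots> \<le> (\<Sum>w\<in>words n. g (pad n w) * (C * measure bernoulli (cyl S n (pad n w))))"
    using bound n nonneg pad_in_S by (intro sum_mono mult_left_mono) (auto simp: measure_bernoulli_cyl)
  also have "\<dots> = C * (\<Sum>w\<in>words n. g (pad n w) * measure bernoulli (cyl S n (pad n w)))"
    by (simp add: sum_distrib_left algebra_simps)
  also have "(\<Sum>w\<in>words n. g (pad n w) * measure bernoulli (cyl S n (pad n w))) = (\<integral>x. g x \<partial>bernoulli)"
    by (rule integral_eq_sum_cylinders[OF sets_bernoulli prob_space.finite_measure[OF prob_space_bernoulli] dep, symmetric])
  finally show ?thesis .
qed

definition "block_cyl r u j = {x\<in>S. \<forall>t<r. x (t + j * r) = u t}"

lemma block_cyl_eq_preimage: "block_cyl r u j = (sshift ^^ (j * r)) -` cyl S r u \<inter> S"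
  unfolding block_cyl_def cyl_def funpow_sshift S_def by auto

lemma block_cyl_in_sets: "invariant_prob S \<nu> \<Longrightarrow> block_cyl r u j \<in> sets \<nu>"
  using measurable_sets[OF measurable_funpow_sshift, of S \<nu> "cyl S r u" "j * r"] cyl_in_sets
    space_invariant_prob[of S \<nu>]
  by (simp add: block_cyl_eq_preimage invariant_prob_def)

lemma measure_block_cyl:
  "invariant_prob S \<mu> \<Longrightarrow> measure \<mu> (block_cyl r u j) = measure \<mu> (cyl S r u)"
  using emeasure_funpow_sshift_preimage[of S \<mu> "cyl S r u" "j * r"] cyl_in_sets
  by (simp add: block_cyl_eq_preimage invariant_prob_def measure_def)

lemma block_cyl_eq_rectangle:
  "block_cyl r u j = S \<inter> {x. \<forall>i\<in>{j*r..<j*r+r}. x i \<in> {u (i - j*r)}}"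
proof -
  have "(\<forall>t<r. x (t + j*r) = u t) \<longleftrightarrow> (\<forall>i\<in>{j*r..<j*r+r}. x i = u (i - j*r))" for x
    by (metis add.commute atLeastLessThan_iff add_less_cancel_left diff_add_inverse le_add1
        le_add_diff_inverse)
  then show ?thesis unfolding block_cyl_def by auto
qed

lemma prod_block_weight:
  assumes u: "u \<in> S"
  shows "(\<Prod>i\<in>{j*r..<j*r+r}. measure letter_pmf {u (i - j*r)}) = cyl_weight r u"
proof -
  have "(\<Prod>i\<in>{j*r..<j*r+r}. measure letter_pmf {u (i - j*r)})
      = (\<Prod>i\<in>{0+j*r..<r+j*r}. measure letter_pmf {u (i - j*r)})"
    by (simp add: add.commute)
  also have "\<dots> = (\<Prod>i\<in>{0..<r}. measure letter_pmf {u i})" by (subst prod.shift_bounds_nat_ivl) simp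
  also have "\<dots> = cyl_weight r u" using u by (simp add: cyl_weight_def measure_letter_pmf S_def atLeast0LessThan)
  finally show ?thesis .
qed

lemma measure_bernoulli_block_cyl: "u \<in> S \<Longrightarrow> measure bernoulli (block_cyl r u j) = cyl_weight r u"
  unfolding block_cyl_eq_rectangle measure_bernoulli_rectangle[OF finite_atLeastLessThan]
  by (rule prod_block_weight)

lemma measure_bernoulli_block_cyl_Int:
  assumes u: "u \<in> S" and jj: "j \<noteq> j'"
  shows "measure bernoulli (block_cyl r u j \<inter> block_cyl r u j') = cyl_weight r u ^ 2"
proof -
  define B where "B j = {j*r..<j*r+r}" for j
  have disj: "B j \<inter> B j' = {}"
  proof (rule ccontr)
    assume "B j \<inter> B j' \<noteq> {}"
    then obtain i where "i \<in> B j" "i \<in> B j'" by blast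
    then have "j*r \<le> i" "i < j*r + r" "j'*r \<le> i" "i < j'*r + r" by (auto simp: B_def)
    then have "i div r = j" "i div r = j'"
      by (metis add.commute div_nat_eqI mult.commute mult_Suc_right)+
    then show False using jj by simp
  qed
  define G where "G i = (if i \<in> B j then {u (i - j*r)} else {u (i - j'*r)})" for i
  have "block_cyl r u j \<inter> block_cyl r u j' = S \<inter> {x. \<forall>i\<in>B j \<union> B j'. x i \<in> G i}"
    unfolding block_cyl_eq_rectangle B_def[symmetric] G_def using disj by auto
  then have "measure bernoulli (block_cyl r u j \<inter> block_cyl r u j')
      = (\<Prod>i\<in>B j. measure letter_pmf (G i)) * (\<Prod>i\<in>B j'. measure letter_pmf (G i))"
    using disj by (simp add: measure_bernoulli_rectangle B_def prod.union_disjoint)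
  also have "(\<Prod>i\<in>B j'. measure letter_pmf (G i)) = (\<Prod>i\<in>B j'. measure letter_pmf {u (i - j'*r)})"
    using disj by (intro prod.cong refl) (auto simp: G_def)
  also have "(\<Prod>i\<in>B j. measure letter_pmf (G i)) = (\<Prod>i\<in>B j. measure letter_pmf {u (i - j*r)})"
    by (intro prod.cong refl) (auto simp: G_def)
  finally show ?thesis using prod_block_weight[OF u] by (simp add: B_def power2_eq_square)
qed

definition "block_count N r u x = (\<Sum>j<N. indicator (block_cyl r u j) x - cyl_weight r u)"

lemma moments_block_count:
  assumes inv: "invariant_prob S \<mu>"
  shows "integrable \<mu> (block_count N r u)" "integrable \<mu> (\<lambda>x. (block_count N r u x)\<^sup>2)"
    and "(\<integral>x. block_count N r u x \<partial>\<mu>) = real N * (measure \<mu> (cyl S r u) - cyl_weight r u)"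
proof -
  interpret prob_space \<mu> using inv by (simp add: invariant_prob_def)
  note moments = moments_sum_centered_indicators[OF block_cyl_in_sets[OF inv], where N=N and c="cyl_weight r u"]
  show "integrable \<mu> (block_count N r u)" "integrable \<mu> (\<lambda>x. (block_count N r u x)\<^sup>2)"
    using moments(1,3) by (simp_all add: block_count_def[abs_def])
  show "(\<integral>x. block_count N r u x \<partial>\<mu>) = real N * (measure \<mu> (cyl S r u) - cyl_weight r u)"
    unfolding block_count_def moments(4) measure_block_cyl[OF inv] by simp
qed

lemma integral_block_count_square_bernoulli:
  assumes u: "u \<in> S"
  shows "(\<integral>x. (block_count N r u x)\<^sup>2 \<partial>bernoulli) = real N * (cyl_weight r u - (cyl_weight r u)\<^sup>2)"
proof -
  interpret prob_space bernoulli by (rule prob_space_bernoulli)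
  note moments = moments_sum_centered_indicators[OF block_cyl_in_sets[OF invariant_bernoulli],
      where N=N and c="cyl_weight r u"]
  have "(\<integral>x. (block_count N r u x)\<^sup>2 \<partial>bernoulli)
      = (\<Sum>j<N. \<Sum>j'<N. if j = j' then cyl_weight r u - (cyl_weight r u)\<^sup>2 else 0)"
    unfolding block_count_def moments(2)
    using measure_bernoulli_block_cyl[OF u] measure_bernoulli_block_cyl_Int[OF u]
    by (intro sum.cong refl) (auto simp: power2_eq_square)
  then show ?thesis by simp
qed

lemma block_count_cong:
  assumes "\<And>j. j < N * r \<Longrightarrow> x j = y j" and "x \<in> S" "y \<in> S"
  shows "block_count N r u x = block_count N r u y"
  unfolding block_count_def
proof (intro sum.cong refl arg_cong2[where f = minus])
  fix j assume "j \<in> {..<N}"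
  have "x (t + j * r) = y (t + j * r)" if "t < r" for t
  proof (rule assms(1))
    have "t + j * r < Suc j * r" using that by simp
    also have "\<dots> \<le> N * r" using \<open>j \<in> {..<N}\<close> by (intro mult_right_mono) auto
    finally show "t + j * r < N * r" .
  qed
  then show "indicator (block_cyl r u j) x = (indicator (block_cyl r u j) y :: real)"
    using assms(2,3) by (auto simp: block_cyl_def indicator_def)
qed

text \<open>The second moment of the block count is at most N under the Bernoulli measure, where the
  blocks are independent, and the cylinder bound transfers this to \<mu>.\<close>
lemma block_count_deviation_bound:
  fixes \<mu> :: "(nat \<Rightarrow> nat) measure"
  assumes inv: "invariant_prob S \<mu>"
    and bound: "\<And>z n. z \<in> S \<Longrightarrow> n \<ge> 1 \<Longrightarrow> measure \<mu> (cyl S n z) \<le> C * cyl_weight n z"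
    and u: "u \<in> S" and r: "r \<ge> 1" and N: "N \<ge> 1"
  shows "real N * (measure \<mu> (cyl S r u) - cyl_weight r u)\<^sup>2 \<le> C"
proof -
  interpret \<mu>: prob_space \<mu> using inv by (simp add: invariant_prob_def)
  have C: "C \<ge> 0"
  proof -
    have "0 \<le> C * cyl_weight 1 u" using bound[OF u, of 1] measure_nonneg order_trans by blast
    then show ?thesis using cyl_weight_pos[OF u, of 1] by (simp add: zero_le_mult_iff)
  qed
  have "(real N * (measure \<mu> (cyl S r u) - cyl_weight r u))\<^sup>2 = (\<integral>x. block_count N r u x \<partial>\<mu>)\<^sup>2"
    by (simp add: moments_block_count[OF inv])
  also have "\<dots> \<le> (\<integral>x. (block_count N r u x)\<^sup>2 \<partial>\<mu>)"
    using \<mu>.variance_eq[of "block_count N r u"] \<mu>.variance_positive[of "block_count N r u"]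
      moments_block_count[OF inv] by simp
  also have "\<dots> \<le> C * (\<integral>x. (block_count N r u x)\<^sup>2 \<partial>bernoulli)"
  proof (rule integral_le_of_cylinder_bound[OF _ _ bound])
    show "sets \<mu> = sets (restrict_space borel S)" "prob_space \<mu>" using inv by (simp_all add: invariant_prob_def)
    show "1 \<le> N * r" using N r by simp
    fix x y assume "x \<in> S" "y \<in> S" "\<And>j. j < N * r \<Longrightarrow> x j = y j"
    then have "block_count N r u x = block_count N r u y" by (intro block_count_cong)
    then show "(block_count N r u x)\<^sup>2 = (block_count N r u y)\<^sup>2" by simp
  qed auto
  also have "\<dots> \<le> C * real N"
  proof -
    have "cyl_weight r u - (cyl_weight r u)\<^sup>2 \<le> 1"
      using zero_le_power2[of "cyl_weight r u - 1/2"] by (simp add: power2_eq_square algebra_simps)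
    then have "real N * (cyl_weight r u - (cyl_weight r u)\<^sup>2) \<le> real N" by (simp add: mult_left_le)
    then show ?thesis unfolding integral_block_count_square_bernoulli[OF u] using C by (rule mult_left_mono)
  qed
  finally have "real N * (real N * (measure \<mu> (cyl S r u) - cyl_weight r u)\<^sup>2) \<le> real N * C"
    by (simp add: power_mult_distrib power2_eq_square algebra_simps)
  then show ?thesis using N by simp
qed

lemma measure_cyl_eq_of_cylinder_bound:
  fixes \<mu> :: "(nat \<Rightarrow> nat) measure"
  assumes inv: "invariant_prob S \<mu>"
    and bound: "\<And>z n. z \<in> S \<Longrightarrow> n \<ge> 1 \<Longrightarrow> measure \<mu> (cyl S n z) \<le> C * cyl_weight n z"
    and u: "u \<in> S" and r: "r \<ge> 1"
  shows "measure \<mu> (cyl S r u) = cyl_weight r u"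
proof (rule ccontr)
  define d where "d = (measure \<mu> (cyl S r u) - cyl_weight r u)\<^sup>2"
  assume "measure \<mu> (cyl S r u) \<noteq> cyl_weight r u"
  then have d: "d > 0" by (simp add: d_def)
  obtain N :: nat where "C / d < real N" using reals_Archimedean2 by blast
  then have "C < real N * d" using d by (simp add: divide_less_eq)
  also have "\<dots> \<le> real (max N 1) * d" using d by (intro mult_right_mono) auto
  finally have "C < real (max N 1) * d" .
  moreover have "real (max N 1) * d \<le> C"
    unfolding d_def using block_count_deviation_bound[OF inv bound u r, of "max N 1"] by simp
  ultimately show False by simp
qed

section \<open>Gibbs measures of one-coordinate potentials\<close>

lemma exp_bsum_eq_prod:
  assumes "\<forall>x\<in>S. \<phi> x = \<Phi> (x 0)" and "z \<in> S"
  shows "exp (bsum \<phi> n z) = (\<Prod>i<n. exp (\<Phi> (z i)))"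
proof -
  have "bsum \<phi> n z = (\<Sum>i<n. \<Phi> (z i))"
    unfolding bsum_def funpow_sshift using assms by (intro sum.cong) (auto simp: S_def)
  then show ?thesis by (simp add: exp_sum)
qed

lemma sum_cylinders_sup_exp_bsum:
  assumes \<phi>: "\<forall>x\<in>S. \<phi> x = \<Phi> (x 0)"
  shows "(\<Sum>C\<in>cylinders S n. (SUP z\<in>C. exp (bsum \<phi> n z))) = Z ^ n"
proof -
  have cyls: "cylinders S n = (\<lambda>w. cyl S n (pad n w)) ` words n"
  proof
    show "cylinders S n \<subseteq> (\<lambda>w. cyl S n (pad n w)) ` words n"
    proof
      fix C assume "C \<in> cylinders S n"
      then obtain z where z: "z \<in> S" "C = cyl S n z" by (auto simp: cylinders_def)
      have "cyl S n z = cyl S n (pad n (restrict z {..<n}))"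
        by (auto simp: cyl_def pad_def)
      then show "C \<in> (\<lambda>w. cyl S n (pad n w)) ` words n" using z restrict_in_words by blast
    qed
    show "(\<lambda>w. cyl S n (pad n w)) ` words n \<subseteq> cylinders S n"
      using pad_in_S by (auto simp: cylinders_def)
  qed
  have inj: "inj_on (\<lambda>w. cyl S n (pad n w)) (words n)"
  proof
    fix w w' assume w: "w \<in> words n" "w' \<in> words n" and e: "cyl S n (pad n w) = cyl S n (pad n w')"
    have "pad n w \<in> cyl S n (pad n w)" using pad_in_S[OF w(1)] by (simp add: cyl_def)
    then have "pad n w \<in> cyl S n (pad n w')" using e by simp
    then have "restrict (pad n w) {..<n} = w'" using mem_cyl_pad_iff[OF w(2) pad_in_S[OF w(1)]] by simp
    moreover have "restrict (pad n w) {..<n} = w" using w(1)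
      by (auto simp: pad_def words_def PiE_iff extensional_def fun_eq_iff)
    ultimately show "w = w'" by simp
  qed
  have sup: "(SUP z\<in>cyl S n (pad n w). exp (bsum \<phi> n z)) = (\<Prod>i<n. exp (\<Phi> (w i)))"
    if w: "w \<in> words n" for w
  proof -
    have "exp (bsum \<phi> n z) = (\<Prod>i<n. exp (\<Phi> (w i)))" if "z \<in> cyl S n (pad n w)" for z
      using that exp_bsum_eq_prod[OF \<phi>] by (auto simp: cyl_def pad_def)
    then have "(SUP z\<in>cyl S n (pad n w). exp (bsum \<phi> n z)) = (SUP z\<in>cyl S n (pad n w). (\<Prod>i<n. exp (\<Phi> (w i))))"
      by (rule SUP_cong[OF refl])
    also have "\<dots> = (\<Prod>i<n. exp (\<Phi> (w i)))"
      using pad_in_S[OF w] by (intro cSUP_const) (auto simp: cyl_def)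
    finally show ?thesis .
  qed
  have "(\<Sum>C\<in>cylinders S n. (SUP z\<in>C. exp (bsum \<phi> n z))) = (\<Sum>w\<in>words n. (\<Prod>i<n. exp (\<Phi> (w i))))"
    unfolding cyls using inj sup by (simp add: sum.reindex)
  also have "\<dots> = (\<Prod>i<n. \<Sum>a\<in>A. exp (\<Phi> a))"
    unfolding words_def using finite_alphabet by (subst prod_sum_PiE) auto
  finally show ?thesis by (simp add: Z_def)
qed

lemma pressure_eq_ln_Z:
  assumes "\<forall>x\<in>S. \<phi> x = \<Phi> (x 0)"
  shows "pressure S \<phi> = ln Z"
proof -
  have "\<forall>\<^sub>F n in sequentially. ln (\<Sum>C\<in>cylinders S n. (SUP z\<in>C. exp (bsum \<phi> n z))) / real n = ln Z"
    unfolding eventually_sequentially sum_cylinders_sup_exp_bsum[OF assms]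
    using Z_pos by (intro exI[of _ 1]) (auto simp: ln_realpow)
  then show ?thesis unfolding pressure_def by (intro limI tendsto_eventually)
qed

lemma gibbs_weight_eq_cyl_weight:
  assumes "\<forall>x\<in>S. \<phi> x = \<Phi> (x 0)" and z: "z \<in> S"
  shows "exp (- real n * pressure S \<phi> + bsum \<phi> n z) = cyl_weight n z"
proof -
  have "exp (- real n * pressure S \<phi> + bsum \<phi> n z) = exp (bsum \<phi> n z) / exp (real n * ln Z)"
    by (simp add: pressure_eq_ln_Z[OF assms(1)] exp_diff)
  also have "exp (real n * ln Z) = Z ^ n"
    using Z_pos by (simp add: exp_of_nat_mult)
  also have "exp (bsum \<phi> n z) / Z ^ n = (\<Prod>i<n. exp (\<Phi> (z i)) / Z)"
    by (simp add: exp_bsum_eq_prod[OF assms] prod_dividef)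
  also have "\<dots> = cyl_weight n z"
    unfolding cyl_weight_def using z by (intro prod.cong refl) (auto simp: weight_def S_def)
  finally show ?thesis .
qed

lemma gibbs_iff_eq_bernoulli:
  assumes \<phi>: "\<forall>x\<in>S. \<phi> x = \<Phi> (x 0)"
  shows "gibbs S \<phi> \<mu> \<longleftrightarrow> \<mu> = bernoulli"
proof
  assume "gibbs S \<phi> \<mu>"
  then obtain C0 where inv: "invariant_prob S \<mu>"
    and upper: "\<And>z n. z \<in> S \<Longrightarrow> n \<ge> 1 \<Longrightarrow>
        measure \<mu> (cyl S n z) / exp (- real n * pressure S \<phi> + bsum \<phi> n z) < C0"
    unfolding gibbs_def by blast
  have "measure \<mu> (cyl S n z) \<le> C0 * cyl_weight n z" if z: "z \<in> S" and n: "n \<ge> 1" for z n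
    using upper[OF z n] cyl_weight_pos[OF z, of n]
    unfolding gibbs_weight_eq_cyl_weight[OF \<phi> z] by (simp add: divide_less_eq)
  then have "measure \<mu> (cyl S n z) = cyl_weight n z" if "z \<in> S" "n \<ge> 1" for z n
    using measure_cyl_eq_of_cylinder_bound[OF inv] that by blast
  then show "\<mu> = bernoulli"
    using inv by (intro eq_bernoulli_of_cylinders) (auto simp: invariant_prob_def)
next
  assume \<mu>: "\<mu> = bernoulli"
  have ratio: "measure \<mu> (cyl S n z) / exp (- real n * pressure S \<phi> + bsum \<phi> n z) = 1"
    if "z \<in> S" for z n
    unfolding gibbs_weight_eq_cyl_weight[OF \<phi> that] \<mu> measure_bernoulli_cyl[OF that]
    using cyl_weight_pos[OF that, of n] by simp
  show "gibbs S \<phi> \<mu>"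
    unfolding gibbs_def
  proof (intro conjI exI[of _ "2::real"] ballI allI impI)
    fix z and n :: nat assume "z \<in> S"
    then show "inverse 2 < measure \<mu> (cyl S n z) / exp (- real n * pressure S \<phi> + bsum \<phi> n z)"
      "measure \<mu> (cyl S n z) / exp (- real n * pressure S \<phi> + bsum \<phi> n z) < 2"
      unfolding ratio[OF \<open>z \<in> S\<close>] by simp_all
  qed (simp_all add: \<mu> invariant_bernoulli)
qed

lemma distr_letter_map_eq_bernoulli:
  fixes p :: "nat \<Rightarrow> nat" and \<pi> :: "(nat \<Rightarrow> nat) \<Rightarrow> (nat \<Rightarrow> nat)"
  assumes \<pi>: "\<forall>x\<in>S. \<forall>i. \<pi> x i = p (x i)"
  defines "G b \<equiv> \<Sum>a\<in>{a\<in>A. p a = b}. exp (\<Phi> a)"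
  shows "distr bernoulli (restrict_space borel {y. \<forall>i. y i \<in> p ` A}) \<pi>
       = bernoulli_shift.bernoulli (p ` A) (\<lambda>b. ln (G b))"
proof -
  interpret Y: bernoulli_shift "p ` A" "\<lambda>b. ln (G b)"
    using finite_alphabet alphabet_nonempty by unfold_locales auto
  have G_pos: "G b > 0" if "b \<in> p ` A" for b
    unfolding G_def using that finite_alphabet by (intro sum_pos) auto
  have Z_eq: "Y.Z = Z"
  proof -
    have "Y.Z = (\<Sum>b\<in>p ` A. G b)" unfolding Y.Z_def using G_pos by (intro sum.cong) auto
    also have "\<dots> = Z" unfolding G_def Z_def by (rule sum.image_gen[symmetric]) (rule finite_alphabet)
    finally show ?thesis .
  qed
  have \<pi>_meas: "\<pi> \<in> measurable bernoulli (restrict_space borel Y.S)"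
  proof -
    have "(\<lambda>x i. p (x i)) \<in> measurable (restrict_space borel S) (restrict_space borel Y.S)"
      by (intro measurable_restrict_space3[OF measurable_letter_map]) (auto simp: S_def Y.S_def)
    then have "(\<lambda>x i. p (x i)) \<in> measurable bernoulli (restrict_space borel Y.S)"
      by (simp add: measurable_cong_sets[OF sets_bernoulli refl])
    then show ?thesis
      using \<pi> by (subst measurable_cong[where g="\<lambda>x i. p (x i)"]) (auto simp: space_bernoulli)
  qed
  define \<nu> where "\<nu> = distr bernoulli (restrict_space borel Y.S) \<pi>"
  have "\<nu> = Y.bernoulli"
  proof (rule Y.eq_bernoulli_of_cylinders)
    show "sets \<nu> = sets (restrict_space borel Y.S)" by (simp add: \<nu>_def)
    show "prob_space \<nu>" unfolding \<nu>_def by (rule prob_space.prob_space_distr[OF prob_space_bernoulli \<pi>_meas])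
    fix z n assume z: "z \<in> Y.S"
    have "\<pi> -` cyl Y.S n z \<inter> space bernoulli = S \<inter> {x. \<forall>j\<in>{..<n}. x j \<in> {a. p a = z j}}"
      using \<pi> by (auto simp: cyl_def space_bernoulli S_def Y.S_def)
    then have "measure \<nu> (cyl Y.S n z) = (\<Prod>j<n. measure letter_pmf {a. p a = z j})"
      unfolding \<nu>_def using measure_distr[OF \<pi>_meas Y.cyl_in_sets]
        measure_bernoulli_rectangle[of "{..<n}" "\<lambda>j. {a. p a = z j}"] by simp
    also have "\<dots> = (\<Prod>j<n. G (z j) / Z)"
      by (simp add: measure_letter_pmf weight_def G_def sum_divide_distrib Int_def conj_commute)
    also have "\<dots> = Y.cyl_weight n z"
      unfolding Y.cyl_weight_def Y.weight_def Z_eq using z G_pos by (intro prod.cong refl) (auto simp: Y.S_def)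
    finally show "measure \<nu> (cyl Y.S n z) = Y.cyl_weight n z" .
  qed
  then show ?thesis by (simp add: \<nu>_def Y.S_def)
qed
end

section \<open>The one-block factor\<close>

lemma integral_coordinate_eq_integral_coordinate_0:
  fixes h :: "nat \<Rightarrow> real"
  assumes inv: "invariant_prob Y m"
  shows "(\<integral>y. h (y i) \<partial>m) = (\<integral>y. h (y 0) \<partial>m)"
proof -
  have sets_m: "sets m = sets (restrict_space borel Y)" and sh: "sshift \<in> measurable m m"
    and preserves: "\<forall>A\<in>sets m. emeasure m (sshift -` A \<inter> space m) = emeasure m A"
    using inv by (auto simp: invariant_prob_def)
  have meas: "(\<lambda>y. h (y i)) \<in> borel_measurable m" for i
  proof -
    have "(\<lambda>y. h (y i)) \<in> borel_measurable (restrict_space borel Y)"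
      by (intro measurable_restrict_space1) measurable
    then show ?thesis by (simp add: measurable_cong_sets[OF sets_m refl])
  qed
  have "distr m m sshift = m"
    using sh preserves by (intro measure_eqI) (simp_all add: emeasure_distr)
  then have "(\<integral>y. h (y (Suc i)) \<partial>m) = (\<integral>y. h (y i) \<partial>m)" for i
    using integral_distr[OF sh meas, of i] by (simp add: sshift_def)
  then show ?thesis by (induction i) simp_all
qed

lemma integral_ln_prod_coordinates:
  fixes G :: "nat \<Rightarrow> real"
  assumes inv: "invariant_prob Y m" and B: "finite B" and Y: "\<forall>y\<in>Y. \<forall>i. y i \<in> B"
    and G: "\<forall>b\<in>B. G b > 0"
  shows "(\<integral>y. ln (\<Prod>i<n. G (y i)) \<partial>m) = real n * (\<integral>y. ln (G (y 0)) \<partial>m)"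
proof -
  interpret prob_space m using inv by (simp add: invariant_prob_def)
  have sp: "space m = Y" by (rule space_invariant_prob[OF inv])
  have sets_m: "sets m = sets (restrict_space borel Y)" using inv by (simp add: invariant_prob_def)
  have integrable: "integrable m (\<lambda>y. ln (G (y i)))" for i
  proof (rule integrable_const_bound[where B="\<Sum>b\<in>B. \<bar>ln (G b)\<bar>"])
    show "AE y in m. norm (ln (G (y i))) \<le> (\<Sum>b\<in>B. \<bar>ln (G b)\<bar>)"
    proof (rule AE_I2)
      fix y assume "y \<in> space m"
      then have "y i \<in> B" using Y sp by auto
      then show "norm (ln (G (y i))) \<le> (\<Sum>b\<in>B. \<bar>ln (G b)\<bar>)"
        using member_le_sum[of "y i" B "\<lambda>b. \<bar>ln (G b)\<bar>"] B by simp
    qed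
    have "(\<lambda>y. ln (G (y i))) \<in> borel_measurable (restrict_space borel Y)"
      by (intro measurable_restrict_space1) measurable
    then show "(\<lambda>y. ln (G (y i))) \<in> borel_measurable m"
      by (simp add: measurable_cong_sets[OF sets_m refl])
  qed
  have "(\<integral>y. ln (\<Prod>i<n. G (y i)) \<partial>m) = (\<integral>y. (\<Sum>i<n. ln (G (y i))) \<partial>m)"
  proof (rule Bochner_Integration.integral_cong[OF refl])
    fix y assume "y \<in> space m"
    then have "y i \<in> B" for i using Y sp by auto
    then have "G (y i) \<noteq> 0" for i using G by (simp add: less_imp_neq[symmetric])
    then show "ln (\<Prod>i<n. G (y i)) = (\<Sum>i<n. ln (G (y i)))" by (subst ln_prod) simp_all
  qed
  also have "\<dots> = (\<Sum>i<n. (\<integral>y. ln (G (y i)) \<partial>m))"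
    using integrable by (rule Bochner_Integration.integral_sum)
  also have "\<dots> = (\<Sum>i<n. (\<integral>y. ln (G (y 0)) \<partial>m))"
    by (intro sum.cong refl integral_coordinate_eq_integral_coordinate_0[OF inv])
  also have "\<dots> = real n * (\<integral>y. ln (G (y 0)) \<partial>m)" by simp
  finally show ?thesis .
qed

locale one_block_potential =
  fixes k :: nat and Y :: "(nat \<Rightarrow> nat) set" and \<pi> :: "(nat \<Rightarrow> nat) \<Rightarrow> (nat \<Rightarrow> nat)"
    and p :: "nat \<Rightarrow> nat" and f :: "(nat \<Rightarrow> nat) \<Rightarrow> real" and F :: "nat \<Rightarrow> real"
  assumes k: "k \<ge> 1"
    and \<pi>_letter: "\<forall>x\<in>full_shift k. \<forall>i. \<pi> x i = p (x i)"
    and \<pi>_onto: "\<pi> ` full_shift k = Y"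
    and f_letter: "\<forall>x\<in>full_shift k. f x = F (x 0)"
begin

abbreviation "X \<equiv> full_shift k"

definition "G b = (\<Sum>a\<in>{a\<in>{1..k}. p a = b}. exp (F a))"

lemma G_pos: "b \<in> p ` {1..k} \<Longrightarrow> G b > 0"
  unfolding G_def by (intro sum_pos) auto

lemma Y_eq: "Y = {y. \<forall>i. y i \<in> p ` {1..k}}"
proof
  show "Y \<subseteq> {y. \<forall>i. y i \<in> p ` {1..k}}"
  proof
    fix y assume "y \<in> Y"
    then obtain x where x: "x \<in> X" "y = \<pi> x" using \<pi>_onto by blast
    then have "y i = p (x i)" "x i \<in> {1..k}" for i using \<pi>_letter by (simp_all add: full_shift_def)
    then show "y \<in> {y. \<forall>i. y i \<in> p ` {1..k}}" by simp
  qed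
  show "{y. \<forall>i. y i \<in> p ` {1..k}} \<subseteq> Y"
  proof
    fix y :: "nat \<Rightarrow> nat" assume y: "y \<in> {y. \<forall>i. y i \<in> p ` {1..k}}"
    define x where "x i = (SOME a. a \<in> {1..k} \<and> p a = y i)" for i
    have x: "x i \<in> {1..k} \<and> p (x i) = y i" for i
    proof -
      from y obtain a where "a \<in> {1..k}" "y i = p a" by blast
      then have "\<exists>a. a \<in> {1..k} \<and> p a = y i" by (intro exI[of _ a]) simp
      then show ?thesis unfolding x_def by (rule someI_ex)
    qed
    then have "x \<in> X" by (simp add: full_shift_def)
    have "y = \<pi> x"
    proof (rule ext)
      fix i show "y i = \<pi> x i" using \<pi>_letter \<open>x \<in> X\<close> x by simp
    qed
    then show "y \<in> Y" unfolding \<pi>_onto[symmetric] using \<open>x \<in> X\<close> by (rule image_eqI)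
  qed
qed

definition "fiber_words n y = PiE {..<n} (\<lambda>i. {a\<in>{1..k}. p a = y i})"
definition "pad1 n w = (\<lambda>i. if i < n then w i else (1::nat))"

lemma pad1_in_X: "w \<in> fiber_words n y \<Longrightarrow> pad1 n w \<in> X"
  using k by (auto simp: pad1_def full_shift_def fiber_words_def PiE_iff)

lemma restrict_in_fiber_words:
  "x \<in> X \<Longrightarrow> \<forall>i<n. p (x i) = y i \<Longrightarrow> restrict x {..<n} \<in> fiber_words n y"
  by (auto simp: fiber_words_def full_shift_def)

lemma mem_cyl_pad1_iff:
  "w \<in> fiber_words n y \<Longrightarrow> x \<in> cyl X n (pad1 n w) \<longleftrightarrow> x \<in> X \<and> restrict x {..<n} = w"
  by (auto simp: cyl_def pad1_def fiber_words_def PiE_iff extensional_def fun_eq_iff)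

lemma cyl_in_adm_cyls_iff:
  assumes x: "x \<in> X"
  shows "cyl X n x \<in> adm_cyls X Y \<pi> n y \<longleftrightarrow> (\<forall>i<n. p (x i) = y i)"
proof
  assume "cyl X n x \<in> adm_cyls X Y \<pi> n y"
  then have "\<pi> x \<in> cyl Y n y" using x by (auto simp: adm_cyls_def cyl_def)
  then show "\<forall>i<n. p (x i) = y i" using \<pi>_letter x by (auto simp: cyl_def)
next
  assume fiber: "\<forall>i<n. p (x i) = y i"
  have "\<pi> ` cyl X n x \<subseteq> cyl Y n y"
    using \<pi>_onto \<pi>_letter fiber by (auto simp: cyl_def)
  then show "cyl X n x \<in> adm_cyls X Y \<pi> n y"
    using x by (auto simp: adm_cyls_def cylinders_def)
qed

lemma adm_cylsE:
  assumes "C \<in> adm_cyls X Y \<pi> n y"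
  obtains x where "x \<in> X" "C = cyl X n x" "\<forall>i<n. p (x i) = y i"
proof -
  from assms obtain x where x: "x \<in> X" "C = cyl X n x" by (auto simp: adm_cyls_def cylinders_def)
  with assms have "\<forall>i<n. p (x i) = y i" using cyl_in_adm_cyls_iff by simp
  with x that show thesis by blast
qed

lemma cyl_pad1_in_adm_cyls:
  assumes w: "w \<in> fiber_words n y"
  shows "cyl X n (pad1 n w) \<in> adm_cyls X Y \<pi> n y"
proof -
  have "\<forall>i<n. p (pad1 n w i) = y i" using w by (simp add: pad1_def fiber_words_def PiE_iff)
  then show ?thesis using cyl_in_adm_cyls_iff[OF pad1_in_X[OF w]] by simp
qed

text \<open>E meets the cylinder of each fibre word in exactly one point, so restriction to the first
  n coordinates is a bijection from E onto the fibre words.\<close>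
lemma sum_E_set:
  assumes E: "E_set X Y \<pi> n y E"
  shows "(\<Sum>x\<in>E. exp (bsum f n x)) = (\<Prod>i<n. G (y i))"
proof -
  have E_sub: "E \<subseteq> \<Union>(adm_cyls X Y \<pi> n y)"
    and E_card: "\<And>C. C \<in> adm_cyls X Y \<pi> n y \<Longrightarrow> card (E \<inter> C) = 1"
    using E by (auto simp: E_set_def)
  have E_fiber: "x \<in> X \<and> (\<forall>i<n. p (x i) = y i)" if "x \<in> E" for x
  proof -
    obtain C where C: "C \<in> adm_cyls X Y \<pi> n y" "x \<in> C" using E_sub \<open>x \<in> E\<close> by blast
    obtain x0 where "x0 \<in> X" "C = cyl X n x0" "\<forall>i<n. p (x0 i) = y i" using adm_cylsE[OF C(1)] .
    with C(2) show ?thesis by (simp add: cyl_def)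
  qed
  have bij: "bij_betw (\<lambda>x. restrict x {..<n}) E (fiber_words n y)"
  proof (rule bij_betwI')
    fix x x' assume xx: "x \<in> E" "x' \<in> E"
    show "(restrict x {..<n} = restrict x' {..<n}) = (x = x')"
    proof
      assume eq: "restrict x {..<n} = restrict x' {..<n}"
      have C: "cyl X n x \<in> adm_cyls X Y \<pi> n y" using E_fiber[OF xx(1)] cyl_in_adm_cyls_iff by blast
      have "x \<in> E \<inter> cyl X n x" "x' \<in> E \<inter> cyl X n x"
        using xx E_fiber[OF xx(1)] E_fiber[OF xx(2)] eq
        by (auto simp: cyl_def fun_eq_iff restrict_def split: if_splits)
      moreover obtain z where "E \<inter> cyl X n x = {z}" using E_card[OF C] by (auto simp: card_1_singleton_iff)
      ultimately show "x = x'" by (metis singletonD)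
    qed simp
  next
    fix x assume "x \<in> E" then show "restrict x {..<n} \<in> fiber_words n y"
      using E_fiber restrict_in_fiber_words by blast
  next
    fix w assume w: "w \<in> fiber_words n y"
    obtain x where "E \<inter> cyl X n (pad1 n w) = {x}"
      using E_card[OF cyl_pad1_in_adm_cyls[OF w]] by (auto simp: card_1_singleton_iff)
    then have "x \<in> E" "x \<in> cyl X n (pad1 n w)" by auto
    then show "\<exists>x\<in>E. w = restrict x {..<n}" using mem_cyl_pad1_iff[OF w] by auto
  qed
  have "(\<Sum>x\<in>E. exp (bsum f n x)) = (\<Sum>x\<in>E. \<Prod>i<n. exp (F (x i)))"
    using E_fiber f_letter
    by (intro sum.cong refl) (simp add: bsum_def funpow_sshift exp_sum full_shift_def)
  also have "\<dots> = (\<Sum>w\<in>fiber_words n y. \<Prod>i<n. exp (F (w i)))"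
    using sum.reindex_bij_betw[OF bij, of "\<lambda>w. \<Prod>i<n. exp (F (w i))"] by simp
  also have "\<dots> = (\<Prod>i<n. G (y i))"
    unfolding fiber_words_def G_def by (subst prod_sum_PiE) auto
  finally show ?thesis .
qed

lemma E_set_pad1: "E_set X Y \<pi> n y (pad1 n ` fiber_words n y)"
  unfolding E_set_def
proof (intro conjI ballI)
  have "pad1 n w \<in> cyl X n (pad1 n w)" if "w \<in> fiber_words n y" for w
    using pad1_in_X[OF that] by (simp add: cyl_def)
  then show "pad1 n ` fiber_words n y \<subseteq> \<Union>(adm_cyls X Y \<pi> n y)" using cyl_pad1_in_adm_cyls by blast
  fix C assume "C \<in> adm_cyls X Y \<pi> n y"
  then obtain x where x: "x \<in> X" "C = cyl X n x" "\<forall>i<n. p (x i) = y i" by (elim adm_cylsE)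
  have w: "restrict x {..<n} \<in> fiber_words n y" using restrict_in_fiber_words x by blast
  have "pad1 n ` fiber_words n y \<inter> C = {pad1 n (restrict x {..<n})}"
  proof
    show "pad1 n ` fiber_words n y \<inter> C \<subseteq> {pad1 n (restrict x {..<n})}"
      using x by (auto simp: cyl_def pad1_def fiber_words_def PiE_iff extensional_def fun_eq_iff)
    show "{pad1 n (restrict x {..<n})} \<subseteq> pad1 n ` fiber_words n y \<inter> C"
      using w pad1_in_X[OF w] x by (auto simp: cyl_def pad1_def)
  qed
  then show "card (pad1 n ` fiber_words n y \<inter> C) = 1" by simp
qed

lemma gbar_eq_prod: "gbar X Y \<pi> f n y = (\<Prod>i<n. G (y i))"
proof -
  have "{(\<Sum>x\<in>E. exp (bsum f n x)) | E. E_set X Y \<pi> n y E} = {\<Prod>i<n. G (y i)}"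
  proof (intro equalityI subsetI)
    fix v assume "v \<in> {(\<Sum>x\<in>E. exp (bsum f n x)) | E. E_set X Y \<pi> n y E}"
    then show "v \<in> {\<Prod>i<n. G (y i)}" using sum_E_set by auto
  next
    fix v assume "v \<in> {\<Prod>i<n. G (y i)}"
    then show "v \<in> {(\<Sum>x\<in>E. exp (bsum f n x)) | E. E_set X Y \<pi> n y E}"
      using sum_E_set[OF E_set_pad1] E_set_pad1[of n y] by (metis (mono_tags, lifting) mem_Collect_eq singletonD)
  qed
  then show ?thesis unfolding gbar_def by simp
qed

lemma gbar_cocycle:
  assumes "n \<ge> 1"
  shows "gbar X Y \<pi> f n y = gbar X Y \<pi> f 1 y * gbar X Y \<pi> f (n - 1) (sshift y)"
proof -
  obtain m where n: "n = Suc m" using assms by (cases n) auto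
  have "(\<Prod>i<Suc m. G (y i)) = G (y 0) * (\<Prod>i<m. G (y (Suc i)))" by (rule prod.lessThan_Suc_shift)
  then show ?thesis unfolding gbar_eq_prod n by (simp add: sshift_def)
qed

lemma integral_ln_gbar_tendsto:
  assumes inv: "invariant_prob Y m"
  shows "(\<lambda>n. (\<integral>y. ln (gbar X Y \<pi> f n y) \<partial>m) / real n) \<longlonglongrightarrow> (\<integral>y. ln (gbar X Y \<pi> f 1 y) \<partial>m)"
proof (rule tendsto_eventually)
  have Y_letters: "\<forall>y\<in>Y. \<forall>i. y i \<in> p ` {1..k}" by (subst Y_eq) simp
  have "\<forall>b\<in>p ` {1..k}. G b > 0" using G_pos by blast
  note integral_ln_prod_coordinates[OF inv finite_imageI[OF finite_atLeastAtMost] Y_letters this]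
  then have linear: "(\<integral>y. ln (gbar X Y \<pi> f n y) \<partial>m) = real n * (\<integral>y. ln (gbar X Y \<pi> f 1 y) \<partial>m)" for n
    unfolding gbar_eq_prod by simp
  have "(\<integral>y. ln (gbar X Y \<pi> f n y) \<partial>m) / real n = (\<integral>y. ln (gbar X Y \<pi> f 1 y) \<partial>m)" if "n \<ge> 1" for n
    using that linear[of n] by simp
  then show "\<forall>\<^sub>F n in sequentially. (\<integral>y. ln (gbar X Y \<pi> f n y) \<partial>m) / real n = (\<integral>y. ln (gbar X Y \<pi> f 1 y) \<partial>m)"
    unfolding eventually_sequentially by blast
qed

lemma gibbs_full_shift_iff: "gibbs X f \<mu> \<longleftrightarrow> \<mu> = bernoulli_shift.bernoulli {1..k} F"
proof -
  interpret full: bernoulli_shift "{1..k}" F using k by unfold_locales auto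
  have "full.S = X" unfolding full.S_def full_shift_def ..
  from full.gibbs_iff_eq_bernoulli[of f, unfolded this, OF f_letter] show ?thesis .
qed

lemma gibbs_ln_gbar_iff:
  "gibbs Y (\<lambda>y. ln (gbar X Y \<pi> f 1 y)) \<nu> \<longleftrightarrow> \<nu> = bernoulli_shift.bernoulli (p ` {1..k}) (\<lambda>b. ln (G b))"
proof -
  interpret factor: bernoulli_shift "p ` {1..k}" "\<lambda>b. ln (G b)" using k by unfold_locales auto
  have S: "factor.S = Y" unfolding factor.S_def Y_eq ..
  have "\<forall>y\<in>factor.S. ln (gbar X Y \<pi> f 1 y) = ln (G (y 0))" by (simp add: gbar_eq_prod)
  from factor.gibbs_iff_eq_bernoulli[OF this] show ?thesis unfolding S .
qed

lemma distr_bernoulli_full_shift: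
  "distr (bernoulli_shift.bernoulli {1..k} F) (restrict_space borel Y) \<pi>
     = bernoulli_shift.bernoulli (p ` {1..k}) (\<lambda>b. ln (G b))"
proof -
  interpret full: bernoulli_shift "{1..k}" F using k by unfold_locales auto
  have "full.S = X" unfolding full.S_def full_shift_def ..
  from full.distr_letter_map_eq_bernoulli[of \<pi> p, unfolded this, OF \<pi>_letter] show ?thesis
    unfolding Y_eq G_def .
qed

end

theorem proposition6p1:
  fixes k l :: nat and Y :: "(nat \<Rightarrow> nat) set"
    and \<pi> :: "(nat \<Rightarrow> nat) \<Rightarrow> (nat \<Rightarrow> nat)" and f :: "(nat \<Rightarrow> nat) \<Rightarrow> real"
  assumes "k \<ge> 1"
    and "subshift l Y"
    and "one_block_factor (full_shift k) Y \<pi>"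
    and "continuous_on (full_shift k) f"
    and "\<exists>F. \<forall>x\<in>full_shift k. f x = F (x 0)"
  shows "(\<forall>n\<ge>2. \<forall>y\<in>Y. gbar (full_shift k) Y \<pi> f n y
            = gbar (full_shift k) Y \<pi> f 1 y * gbar (full_shift k) Y \<pi> f (n - 1) (sshift y))
    \<and> (\<forall>m. invariant_prob Y m \<longrightarrow>
          (\<lambda>n. (\<integral>y. ln (gbar (full_shift k) Y \<pi> f n y) \<partial>m) / real n)
            \<longlonglongrightarrow> (\<integral>y. ln (gbar (full_shift k) Y \<pi> f 1 y) \<partial>m))
    \<and> (\<exists>!\<mu>. gibbs (full_shift k) f \<mu>)
    \<and> (\<exists>!\<nu>. gibbs Y (\<lambda>y. ln (gbar (full_shift k) Y \<pi> f 1 y)) \<nu>)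
    \<and> (\<forall>\<mu>. gibbs (full_shift k) f \<mu> \<longrightarrow>
          gibbs Y (\<lambda>y. ln (gbar (full_shift k) Y \<pi> f 1 y)) (distr \<mu> (restrict_space borel Y) \<pi>))"
proof -
  obtain p where p: "\<forall>x\<in>full_shift k. \<forall>i. \<pi> x i = p (x i)"
    using assms(3) unfolding one_block_factor_def by blast
  obtain F where F: "\<forall>x\<in>full_shift k. f x = F (x 0)" using assms(5) by blast
  interpret one_block_potential k Y \<pi> p f F
    using assms(1,3) p F by unfold_locales (auto simp: one_block_factor_def)
  show ?thesis
  proof (intro conjI)
    show "\<forall>n\<ge>2. \<forall>y\<in>Y. gbar X Y \<pi> f n y = gbar X Y \<pi> f 1 y * gbar X Y \<pi> f (n - 1) (sshift y)"
      by (intro allI impI ballI gbar_cocycle) simp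
    show "\<forall>m. invariant_prob Y m \<longrightarrow> (\<lambda>n. (\<integral>y. ln (gbar X Y \<pi> f n y) \<partial>m) / real n)
        \<longlonglongrightarrow> (\<integral>y. ln (gbar X Y \<pi> f 1 y) \<partial>m)"
      using integral_ln_gbar_tendsto by blast
    show "\<exists>!\<mu>. gibbs X f \<mu>" unfolding gibbs_full_shift_iff by simp
    show "\<exists>!\<nu>. gibbs Y (\<lambda>y. ln (gbar X Y \<pi> f 1 y)) \<nu>" unfolding gibbs_ln_gbar_iff by simp
    show "\<forall>\<mu>. gibbs X f \<mu> \<longrightarrow> gibbs Y (\<lambda>y. ln (gbar X Y \<pi> f 1 y)) (distr \<mu> (restrict_space borel Y) \<pi>)"
      unfolding gibbs_full_shift_iff gibbs_ln_gbar_iff using distr_bernoulli_full_shift by simp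
  qed
qed

end
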